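(* Let $L\in R[x][\partial]$ have positive order and let $k\in\mathbb{N}$ be such that $M_k(L)$ contains a desingularized operator for $L$. Let $s$ be a nonzero element of the $k$th coefficient ideal $I_k$ of minimal degree in $x$. Then every operator $S\in M_k(L)$ with $\mathrm{lc}_\partial(S)=s$ is a desingularized operator for $L$.
   Context: $R$ is a principal ideal domain with quotient field $Q_R$. $\sigma$ is an $R$-automorphism of $R[x]$ with $\sigma(x)=\gamma x+\tau$ ($\gamma,\tau\in R$, $\gamma$ a unit), and $\delta$ is an $R$-linear $\sigma$-derivation of $R[x]$ with $\delta(x)\in R[x]$ of degree at most $1$. $R[x][\partial]$ is the Ore algebra with $\partial p=\sigma(p)\partial+\delta(p)$, contained in $Q_R(x)[\partial]$. Order $\deg_\partial$ and leading coefficient $\mathrm{lc}_\partial$ are with respect to $\partial$. $\mathrm{cont}(L)=Q_R(x)[\partial]L\cap R[x][\partial]$; $M_k(L)=\{P\in\mathrm{cont}(L):\deg_\partial P\le k\}$; the $k$th coefficient ideal is $I_k=\{[\partial^k]P: P\in M_k(L)\}\cup\{0\}\subseteq R[x]$, where $[\partial^k]P$ is the coefficient of $\partial^k$ in $P$. Removability: for $p\in R[x]$ dividing $\mathrm{lc}_\partial(L)$, $p$ is removable from $L$ at order $k$ if there are $P\in Q_R(x)[\partial]$ of order $k$ and $w,v\in R[x]$ with $\gcd(p,w)=1$ in $R[x]$ such that $PL\in R[x][\partial]$ and $\sigma^{-k}(\mathrm{lc}_\partial(PL))=\frac{w}{vp}\mathrm{lc}_\partial(L)$; removable means removable at some order,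 non-removable otherwise. Desingularized operator: if $L$ has order $r>0$ and $\mathrm{lc}_\partial(L)=c\,p_1^{e_1}\cdots p_m^{e_m}$ with $c\in R$, $p_i\in R[x]\setminus R$ irreducible and pairwise coprime, then $T\in R[x][\partial]$ of order $k$ is desingularized for $L$ if $T\in\mathrm{cont}(L)$ and $\sigma^{r-k}(\mathrm{lc}_\partial(T))=\frac{a}{b\,p_1^{k_1}\cdots p_m^{k_m}}\mathrm{lc}_\partial(L)$ for some $a,b\in R$, $b\neq 0$, nonnegative integers $k_i$ such that $p_i^{d_i}$ is non-removable from $L$ for all integers $d_i>k_i$. *)

theory Defs
  imports "HOL-Computational_Algebra.Computational_Algebra"
begin

class pid = idom +
  assumes principal_ideal:
    "\<And>I :: 'a set. 0 \<in> I \<Longrightarrow> (\<forall>x\<in>I. \<forall>y\<in>I. x + y \<in> I) \<Longrightarrow>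
       (\<forall>x\<in>I. \<forall>r. r * x \<in> I) \<Longrightarrow> \<exists>g. I = range (\<lambda>r. g * r)"

text \<open>Q_R(x) is represented as the fraction field of R[x], i.e. type 'a poly fract.
  R[x] is embedded via to_fract; R is embedded via constant polynomials.
  Ore operators (elements of Q_R(x)[d]) are represented by their coefficient
  sequences, stored in the type ('a poly fract) poly; the coefficient of d^i
  is coeff P i.  The (noncommutative) Ore product is ore_mult below; the
  commutative product of the poly type is never used for operators.\<close>

definition sigmaR :: "'a::idom \<Rightarrow> 'a \<Rightarrow> 'a poly \<Rightarrow> 'a poly" where
  "sigmaR \<gamma> \<tau> p = pcompose p [:\<tau>, \<gamma>:]"

text \<open>The unique R-linear sigma-derivation with delta(x) = dx:
  delta(x^n) = sum_{i<n} sigma(x)^i * dx * x^(n-1-i).\<close>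
definition deltaR :: "'a::idom \<Rightarrow> 'a \<Rightarrow> 'a poly \<Rightarrow> 'a poly \<Rightarrow> 'a poly" where
  "deltaR \<gamma> \<tau> dx p =
     (\<Sum>n\<le>degree p. smult (coeff p n)
        (\<Sum>i<n. [:\<tau>, \<gamma>:] ^ i * dx * [:0, 1:] ^ (n - 1 - i)))"

definition sigmaK :: "'a::idom \<Rightarrow> 'a \<Rightarrow> 'a poly fract \<Rightarrow> 'a poly fract" where
  "sigmaK \<gamma> \<tau> q = (SOME r. \<exists>a b. b \<noteq> 0 \<and> q = Fraction_Field.Fract a b \<and>
        r = Fraction_Field.Fract (sigmaR \<gamma> \<tau> a) (sigmaR \<gamma> \<tau> b))"

definition deltaK :: "'a::idom \<Rightarrow> 'a \<Rightarrow> 'a poly \<Rightarrow> 'a poly fract \<Rightarrow> 'a poly fract" where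
  "deltaK \<gamma> \<tau> dx q = (SOME r. \<exists>a b. b \<noteq> 0 \<and> q = Fraction_Field.Fract a b \<and>
        r = Fraction_Field.Fract (deltaR \<gamma> \<tau> dx a * b - a * deltaR \<gamma> \<tau> dx b)
                                  (b * sigmaR \<gamma> \<tau> b))"

text \<open>Integer powers of sigma on Q_R(x) (sigma is an automorphism when gamma is a unit).\<close>
definition sigma_pow :: "'a::idom \<Rightarrow> 'a \<Rightarrow> int \<Rightarrow> 'a poly fract \<Rightarrow> 'a poly fract" where
  "sigma_pow \<gamma> \<tau> n = (if 0 \<le> n then sigmaK \<gamma> \<tau> ^^ nat n
                       else inv (sigmaK \<gamma> \<tau>) ^^ nat (- n))"

definition lmulD :: "'a::idom \<Rightarrow> 'a \<Rightarrow> 'a poly \<Rightarrow> 'a poly fract poly \<Rightarrow> 'a poly fract poly" where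
  "lmulD \<gamma> \<tau> dx P = pCons 0 (map_poly (sigmaK \<gamma> \<tau>) P) + map_poly (deltaK \<gamma> \<tau> dx) P"

definition ore_mult ::
  "'a::idom \<Rightarrow> 'a \<Rightarrow> 'a poly \<Rightarrow> 'a poly fract poly \<Rightarrow> 'a poly fract poly \<Rightarrow> 'a poly fract poly" where
  "ore_mult \<gamma> \<tau> dx P Q = (\<Sum>i\<le>degree P. smult (coeff P i) ((lmulD \<gamma> \<tau> dx ^^ i) Q))"

definition in_RxD :: "'a::idom poly fract poly \<Rightarrow> bool" where
  "in_RxD P \<longleftrightarrow> (\<forall>i. coeff P i \<in> range to_fract)"

definition cont :: "'a::idom \<Rightarrow> 'a \<Rightarrow> 'a poly \<Rightarrow> 'a poly fract poly \<Rightarrow> 'a poly fract poly set" where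
  "cont \<gamma> \<tau> dx L = {P. in_RxD P \<and> (\<exists>Q. P = ore_mult \<gamma> \<tau> dx Q L)}"

definition Mk :: "'a::idom \<Rightarrow> 'a \<Rightarrow> 'a poly \<Rightarrow> 'a poly fract poly \<Rightarrow> nat \<Rightarrow> 'a poly fract poly set" where
  "Mk \<gamma> \<tau> dx L k = {P \<in> cont \<gamma> \<tau> dx L. degree P \<le> k}"

definition coeff_ideal :: "'a::idom \<Rightarrow> 'a \<Rightarrow> 'a poly \<Rightarrow> 'a poly fract poly \<Rightarrow> nat \<Rightarrow> 'a poly set" where
  "coeff_ideal \<gamma> \<tau> dx L k = {p. \<exists>P \<in> Mk \<gamma> \<tau> dx L k. to_fract p = coeff P k} \<union> {0}"

text \<open>gcd(p,w)=1 is written out as: every common divisor is a unit.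
  p is removable from L at order k (p in R[x] must divide lc(L)).\<close>
definition removable_at ::
  "'a::idom \<Rightarrow> 'a \<Rightarrow> 'a poly \<Rightarrow> 'a poly fract poly \<Rightarrow> 'a poly \<Rightarrow> nat \<Rightarrow> bool" where
  "removable_at \<gamma> \<tau> dx L p k \<longleftrightarrow>
     (\<exists>q. lead_coeff L = to_fract (p * q)) \<and>
     (\<exists>P w v. P \<noteq> 0 \<and> degree P = k \<and> v \<noteq> 0 \<and> (\<forall>g. g dvd p \<longrightarrow> g dvd w \<longrightarrow> g dvd 1) \<and>
        in_RxD (ore_mult \<gamma> \<tau> dx P L) \<and>
        sigma_pow \<gamma> \<tau> (- int k) (lead_coeff (ore_mult \<gamma> \<tau> dx P L)) =
          to_fract w / (to_fract v * to_fract p) * lead_coeff L)"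

definition removable ::
  "'a::idom \<Rightarrow> 'a \<Rightarrow> 'a poly \<Rightarrow> 'a poly fract poly \<Rightarrow> 'a poly \<Rightarrow> bool" where
  "removable \<gamma> \<tau> dx L p \<longleftrightarrow> (\<exists>k. removable_at \<gamma> \<tau> dx L p k)"

definition lc_factorization ::
  "'a::idom poly fract poly \<Rightarrow> 'a \<Rightarrow> 'a poly set \<Rightarrow> ('a poly \<Rightarrow> nat) \<Rightarrow> bool" where
  "lc_factorization L c Ps e \<longleftrightarrow>
     finite Ps \<and> (\<forall>p\<in>Ps. irreducible p \<and> degree p > 0 \<and> e p > 0) \<and>
     (\<forall>p\<in>Ps. \<forall>q\<in>Ps. p \<noteq> q \<longrightarrow> (\<forall>g. g dvd p \<longrightarrow> g dvd q \<longrightarrow> g dvd 1)) \<and>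
     lead_coeff L = to_fract ([:c:] * (\<Prod>p\<in>Ps. p ^ e p))"

text \<open>T is a desingularized operator for L (L of order r, T of order k).
  The factorization of lc(L) is unique up to units and order, so we quantify
  over all such factorizations.\<close>
definition desingularized ::
  "'a::idom \<Rightarrow> 'a \<Rightarrow> 'a poly \<Rightarrow> 'a poly fract poly \<Rightarrow> 'a poly fract poly \<Rightarrow> bool" where
  "desingularized \<gamma> \<tau> dx L T \<longleftrightarrow>
     T \<noteq> 0 \<and> T \<in> cont \<gamma> \<tau> dx L \<and>
     (\<forall>c Ps e. lc_factorization L c Ps e \<longrightarrow>
        (\<exists>a b kk. b \<noteq> 0 \<and>
           sigma_pow \<gamma> \<tau> (int (degree L) - int (degree T)) (lead_coeff T) =
             to_fract [:a:] / (to_fract [:b:] * to_fract (\<Prod>p\<in>Ps. p ^ kk p)) * lead_coeff L \<and>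
           (\<forall>p\<in>Ps. \<forall>d. d > kk p \<longrightarrow> \<not> removable \<gamma> \<tau> dx L (p ^ d))))"

end

theory Submission
  imports Defs
begin

text \<open>Let T \<in> M_k(L) be desingularized. Left multiplication by powers of the Ore variable brings
  S and T to order exactly k without leaving cont(L); their leading coefficients become twists s'
  and t' of lc(S) and lc(T), and both lie in the ideal I_k of R[x]. As s' has the minimal degree
  in I_k, pseudo-division of t' by s' leaves a remainder in I_k of smaller degree, hence zero, so
  s' divides a constant multiple of t'. Applying sigma^(r-k), the normalised leading coefficient
  of S divides a constant multiple of that of T, which is a/(b p_1^k_1 ... p_m^k_m) lc(L). Since
  irreducible polynomials over a principal ideal domain are prime, unique factorisation shows that
  the former is u/(c p_1^(e_1-f_1) ... p_m^(e_m-f_m)) lc(L) with f_i + k_i \<le> e_i, so the exponents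
  only grow and S is desingularized.\<close>

definition is_ideal :: "'a::comm_ring_1 set \<Rightarrow> bool" where
  "is_ideal I \<longleftrightarrow> 0 \<in> I \<and> (\<forall>x\<in>I. \<forall>y\<in>I. x + y \<in> I) \<and> (\<forall>x\<in>I. \<forall>r. r * x \<in> I)"

lemma is_idealI:
  assumes "0 \<in> I" "\<And>x y. x \<in> I \<Longrightarrow> y \<in> I \<Longrightarrow> x + y \<in> I" "\<And>x r. x \<in> I \<Longrightarrow> r * x \<in> I"
  shows "is_ideal I"
  using assms unfolding is_ideal_def by blast

lemma is_ideal_add: "is_ideal I \<Longrightarrow> x \<in> I \<Longrightarrow> y \<in> I \<Longrightarrow> x + y \<in> I"
  unfolding is_ideal_def by blast

lemma is_ideal_mult: "is_ideal I \<Longrightarrow> x \<in> I \<Longrightarrow> r * x \<in> I"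
  unfolding is_ideal_def by blast

lemma is_ideal_diff:
  assumes "is_ideal I" "x \<in> I" "y \<in> I"
  shows "x - y \<in> I"
  using is_ideal_add[OF assms(1,2) is_ideal_mult[OF assms(1,3), of "-1"]] by simp

definition ideal_pair :: "'a::comm_ring_1 \<Rightarrow> 'a \<Rightarrow> 'a set" where
  "ideal_pair x y = {a * x + b * y | a b. True}"

lemma is_ideal_ideal_pair: "is_ideal (ideal_pair x y)"
proof (rule is_idealI)
  show "0 \<in> ideal_pair x y"
    unfolding ideal_pair_def by (auto intro!: exI[of _ 0])
next
  fix u v assume "u \<in> ideal_pair x y" "v \<in> ideal_pair x y"
  then obtain a b c d where "u = a * x + b * y" "v = c * x + d * y"
    unfolding ideal_pair_def by blast
  then have "u + v = (a + c) * x + (b + d) * y" by (simp add: algebra_simps)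
  then show "u + v \<in> ideal_pair x y" unfolding ideal_pair_def by blast
next
  fix u r assume "u \<in> ideal_pair x y"
  then obtain a b where "u = a * x + b * y" unfolding ideal_pair_def by blast
  then have "r * u = (r * a) * x + (r * b) * y" by (simp add: algebra_simps)
  then show "r * u \<in> ideal_pair x y" unfolding ideal_pair_def by blast
qed

lemma left_mem_ideal_pair: "x \<in> ideal_pair x y"
proof -
  have "x = 1 * x + 0 * y" by simp
  then show ?thesis unfolding ideal_pair_def by blast
qed

lemma right_mem_ideal_pair: "y \<in> ideal_pair x y"
proof -
  have "y = 0 * x + 1 * y" by simp
  then show ?thesis unfolding ideal_pair_def by blast
qed

lemma ideal_pairE:
  assumes "z \<in> ideal_pair x y"
  obtains a b where "z = a * x + b * y"
  using assms unfolding ideal_pair_def by blast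

section \<open>Principal ideal domains\<close>

lemma pid_ideal_principal:
  fixes I :: "'a::pid set"
  assumes "is_ideal I"
  obtains g where "I = range ((*) g)"
  using principal_ideal[of I] assms unfolding is_ideal_def by blast

lemma wf_strict_dvd_pid: "wf {(a::'a::pid, b). b \<noteq> 0 \<and> a dvd b \<and> \<not> b dvd a}"
proof (rule ccontr)
  assume "\<not> ?thesis"
  then obtain f :: "nat \<Rightarrow> 'a" where "\<And>i. (f (Suc i), f i) \<in> {(a, b). b \<noteq> 0 \<and> a dvd b \<and> \<not> b dvd a}"
    unfolding wf_iff_no_infinite_down_chain by blast
  then have f: "\<And>i. f i \<noteq> 0 \<and> f (Suc i) dvd f i \<and> \<not> f i dvd f (Suc i)" by simp
  have chain: "f j dvd f i" if "i \<le> j" for i j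
    using that
  proof (induction j rule: dec_induct)
    case (step j)
    then show ?case using f[of j] by (blast intro: dvd_trans)
  qed simp
  \<comment> \<open>The union of the chain of principal ideals is an ideal, hence generated by a single element
    lying in one of them.\<close>
  define I where "I = {x. \<exists>n. f n dvd x}"
  have "is_ideal I"
  proof (rule is_idealI)
    fix x y assume "x \<in> I" "y \<in> I"
    then obtain n m where "f n dvd x" "f m dvd y" unfolding I_def by auto
    moreover have "f (max n m) dvd f n" "f (max n m) dvd f m" by (simp_all add: chain)
    ultimately have "f (max n m) dvd x" "f (max n m) dvd y" by (meson dvd_trans)+
    then show "x + y \<in> I" unfolding I_def by (blast intro: dvd_add)
  qed (auto simp: I_def intro: dvd_mult)
  then obtain g where g: "I = range ((*) g)" by (rule pid_ideal_principal)
  have "g * 1 \<in> I" unfolding g by (rule rangeI)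
  then obtain N where "f N dvd g" unfolding I_def by auto
  moreover have "f (Suc N) \<in> I" unfolding I_def by (blast intro: dvd_refl)
  then have "g dvd f (Suc N)" unfolding g by auto
  ultimately show False using f[of N] dvd_trans by blast
qed

lemma pid_irreducible_imp_prime_elem:
  fixes p :: "'a::pid"
  assumes irr: "irreducible p"
  shows "prime_elem p"
proof (rule prime_elemI)
  show "p \<noteq> 0" "\<not> p dvd 1" using irr by (auto simp: irreducible_def)
  fix a b assume pab: "p dvd a * b"
  show "p dvd a \<or> p dvd b"
  proof (cases "p dvd a")
    case pa: False
    obtain g where g: "ideal_pair p a = range ((*) g)"
      using is_ideal_ideal_pair by (rule pid_ideal_principal)
    obtain r where r: "p = g * r" using left_mem_ideal_pair[of p a] unfolding g by auto
    have ga: "g dvd a" using right_mem_ideal_pair[of a p] unfolding g by auto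
    have "g dvd 1"
    proof -
      have "\<not> r dvd 1"
      proof
        assume "r dvd 1"
        then obtain h where "r * h = 1" by (metis dvd_def)
        then have "g = p * h" using r by (simp add: mult.assoc)
        with ga pa show False by (meson dvd_mult_left)
      qed
      then show ?thesis using irreducibleD[OF irr r] by blast
    qed
    then obtain h where h: "g * h = 1" by (metis dvd_def)
    obtain u v where "g = u * p + v * a"
      using range_eqI[of g "(*) g" 1] unfolding g[symmetric] by (auto elim: ideal_pairE)
    then have "b * g = (u * b) * p + v * (a * b)" by (simp add: algebra_simps)
    then have "p dvd b * g * h" using pab by simp
    moreover have "b * g * h = b" by (simp add: h mult.assoc)
    ultimately have "p dvd b" by simp
    then show ?thesis by simp
  qed simp
qed

lemma mult_not_dvd_left_factor:
  fixes x a b :: "'a::idom"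
  assumes "x = a * b" "x \<noteq> 0" "\<not> b dvd 1"
  shows "\<not> x dvd a"
proof
  assume "x dvd a"
  then obtain c where "a = x * c" by auto
  with assms have "x * 1 = x * (c * b)" by (simp add: ac_simps)
  then have "c * b = 1" using assms(2) by (simp only: mult_cancel_left) simp
  with assms show False by (metis dvd_triv_right)
qed

lemma pid_irreducible_factor:
  fixes x :: "'a::pid"
  assumes "x \<noteq> 0" "\<not> x dvd 1"
  obtains q y where "irreducible q" "x = q * y"
  using assms
proof (induction x arbitrary: thesis rule: wf_induct_rule[OF wf_strict_dvd_pid])
  case (1 x)
  show ?case
  proof (cases "irreducible x")
    case True
    then show ?thesis using "1.prems"(1)[of x 1] by simp
  next
    case False
    with "1.prems"(2,3) obtain a b where ab: "x = a * b" "\<not> a dvd 1" "\<not> b dvd 1"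
      by (auto simp: irreducible_def)
    then have "(a, x) \<in> {(a, b). b \<noteq> 0 \<and> a dvd b \<and> \<not> b dvd a}"
      using "1.prems"(2) mult_not_dvd_left_factor by auto
    moreover have "a \<noteq> 0" using ab "1.prems"(2) by auto
    ultimately obtain q y where "irreducible q" "a = q * y" using "1.IH" ab(2) by blast
    then show ?thesis using "1.prems"(1)[of q "y * b"] ab(1) by (simp add: mult.assoc)
  qed
qed

lemma pid_nonzero_induct [consumes 1, case_names unit irreducible_mult]:
  fixes x :: "'a::pid"
  assumes "x \<noteq> 0"
    and unit: "\<And>u. u dvd 1 \<Longrightarrow> P u"
    and irreducible_mult: "\<And>q y. irreducible q \<Longrightarrow> y \<noteq> 0 \<Longrightarrow> P y \<Longrightarrow> P (q * y)"
  shows "P x"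
  using assms(1)
proof (induction x rule: wf_induct_rule[OF wf_strict_dvd_pid])
  case (1 x)
  show ?case
  proof (cases "x dvd 1")
    case False
    then obtain q y where qy: "irreducible q" "x = q * y"
      using pid_irreducible_factor "1.prems" by blast
    have "y \<noteq> 0" using qy "1.prems" by auto
    moreover have "\<not> x dvd y"
      using mult_not_dvd_left_factor[of x y q] qy "1.prems" by (simp add: mult.commute irreducible_def)
    ultimately have "P y" using "1.IH" "1.prems" qy by auto
    then show ?thesis using irreducible_mult qy \<open>y \<noteq> 0\<close> by simp
  qed (rule unit)
qed

section \<open>Irreducible polynomials over a principal ideal domain\<close>

lemma ideal_min_degree_pseudo_dvd:
  fixes m t :: "'a::idom poly"
  assumes I: "is_ideal I" and m: "m \<in> I" "m \<noteq> 0"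
    and min: "\<And>u. u \<in> I \<Longrightarrow> u \<noteq> 0 \<Longrightarrow> degree m \<le> degree u"
    and t: "t \<in> I"
  obtains \<alpha> q where "\<alpha> \<noteq> 0" "smult \<alpha> t = m * q"
proof -
  obtain \<alpha> q where aq: "\<alpha> \<noteq> 0" "smult \<alpha> t = m * q + pseudo_mod t m"
    using pseudo_mod(1)[OF m(2)] by blast
  have "pseudo_mod t m = [:\<alpha>:] * t - q * m" using aq(2) by (simp add: mult.commute)
  also have "\<dots> \<in> I" using I m(1) t by (intro is_ideal_diff is_ideal_mult)
  finally have "pseudo_mod t m = 0" using pseudo_mod(2)[OF m(2)] min by force
  with aq show thesis by (intro that) auto
qed

context
  fixes p :: "'a::pid poly"
  assumes irr: "irreducible p" and deg: "degree p > 0"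
begin

lemma irreducible_poly_const_dvd_imp_unit:
  assumes "[:c:] dvd p"
  shows "c dvd 1"
proof -
  obtain q where q: "p = [:c:] * q" using assms by blast
  have "\<not> q dvd 1"
    using q deg by (auto simp: is_unit_poly_iff split: if_splits)
  then show ?thesis using irreducibleD[OF irr q] by (simp add: is_unit_const_poly_iff)
qed

lemma irreducible_poly_dvd_const_mult_cancel:
  assumes "c \<noteq> 0" "p dvd [:c:] * f"
  shows "p dvd f"
  using assms
proof (induction c arbitrary: f rule: pid_nonzero_induct)
  case (unit u)
  then obtain v where uv: "u * v = 1" by (metis dvd_def)
  have "p dvd smult v ([:u:] * f)" using unit.prems by (rule dvd_smult)
  then show ?case using uv by (simp add: mult.commute)
next
  case (irreducible_mult c y)
  have prime_c: "prime_elem [:c:]"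
    using pid_irreducible_imp_prime_elem[OF irreducible_mult(1)] by (simp add: prime_elem_const_poly_iff)
  obtain z where "[:c * y:] * f = p * z" using irreducible_mult.prems by (elim dvdE)
  moreover have "[:c * y:] = [:c:] * [:y:]" by simp
  ultimately have z: "p * z = [:c:] * ([:y:] * f)" by (metis mult.assoc)
  have "\<not> [:c:] dvd p"
    using irreducible_poly_const_dvd_imp_unit irreducible_mult(1) by (auto simp: irreducible_def)
  moreover have "[:c:] dvd p * z" unfolding z by (rule dvd_triv_left)
  ultimately obtain z' where "z = [:c:] * z'" using prime_c by (auto simp: prime_elem_dvd_mult_iff)
  with z have "[:c:] * (p * z') = [:c:] * ([:y:] * f)" by (simp add: mult.left_commute)
  moreover have "[:c:] \<noteq> 0" using irreducible_mult(1) by (simp add: irreducible_def)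
  ultimately have "p * z' = [:y:] * f" using mult_left_cancel by blast
  then show ?case by (metis dvd_triv_left irreducible_mult.IH)
qed

lemma irreducible_poly_const_mult_eq:
  assumes "c \<noteq> 0" "[:c:] * p = m * q"
  shows "degree m = 0 \<or> degree q = 0"
  using assms
proof (induction c arbitrary: m q rule: pid_nonzero_induct)
  case (unit u)
  then obtain v where uv: "u * v = 1" by (metis dvd_def)
  have "p = [:v:] * ([:u:] * p)" using uv by (simp add: ac_simps)
  also have "\<dots> = ([:v:] * m) * q" using unit.prems by (simp only: mult.assoc)
  finally have "[:v:] * m dvd 1 \<or> q dvd 1" by (rule irreducibleD[OF irr])
  moreover have "v \<noteq> 0" using uv by auto
  ultimately show ?case by (auto simp: is_unit_poly_iff dest!: arg_cong[of _ _ degree])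
next
  case (irreducible_mult c y)
  have prime_c: "prime_elem [:c:]"
    using pid_irreducible_imp_prime_elem[OF irreducible_mult(1)] by (simp add: prime_elem_const_poly_iff)
  have c0: "[:c:] \<noteq> 0" using irreducible_mult(1) by (simp add: irreducible_def)
  have eq: "[:c:] * ([:y:] * p) = m * q" using irreducible_mult.prems by (simp add: ac_simps)
  then have "[:c:] dvd m \<or> [:c:] dvd q" using prime_c by (metis dvd_triv_left prime_elem_dvd_mult_iff)
  then show ?case
  proof
    assume "[:c:] dvd m"
    then obtain m' where m': "m = [:c:] * m'" by blast
    with eq have "[:c:] * ([:y:] * p) = [:c:] * (m' * q)" by (simp only: mult.assoc)
    then have "[:y:] * p = m' * q" using c0 mult_left_cancel by blast
    then have "degree m' = 0 \<or> degree q = 0" by (rule irreducible_mult.IH)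
    then show ?thesis using m' c0 by (auto simp: degree_mult_eq)
  next
    assume "[:c:] dvd q"
    then obtain q' where q': "q = [:c:] * q'" by blast
    with eq have "[:c:] * ([:y:] * p) = [:c:] * (m * q')" by (metis mult.left_commute)
    then have "[:y:] * p = m * q'" using c0 mult_left_cancel by blast
    then have "degree m = 0 \<or> degree q' = 0" by (rule irreducible_mult.IH)
    then show ?thesis using q' c0 by auto
  qed
qed

lemma pid_poly_irreducible_imp_prime_elem: "prime_elem p"
proof (rule prime_elemI)
  show "p \<noteq> 0" "\<not> p dvd 1" using irr by (auto simp: irreducible_def)
  fix f g assume pfg: "p dvd f * g"
  show "p dvd f \<or> p dvd g"
  proof (cases "p dvd f")
    case nf: False
    let ?I = "ideal_pair p f"
    let ?N = "LEAST n. \<exists>m\<in>?I. m \<noteq> 0 \<and> degree m = n"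
    have "\<exists>m\<in>?I. m \<noteq> 0 \<and> degree m = degree p"
      using left_mem_ideal_pair \<open>p \<noteq> 0\<close> by blast
    then have "\<exists>m\<in>?I. m \<noteq> 0 \<and> degree m = ?N" by (rule LeastI)
    then obtain m where m: "m \<in> ?I" "m \<noteq> 0" "degree m = ?N" by blast
    have min: "degree m \<le> degree u" if "u \<in> ?I" "u \<noteq> 0" for u
      unfolding m(3) by (rule Least_le) (use that in blast)
    obtain a b where mab: "m = a * p + b * f" using m(1) by (rule ideal_pairE)
    show ?thesis
    proof (cases "degree m = 0")
      case True
      define \<mu> where "\<mu> = coeff m 0"
      have \<mu>: "m = [:\<mu>:]" "\<mu> \<noteq> 0" using True m(2) unfolding \<mu>_def by (auto dest: degree_0_id)
      have "[:\<mu>:] * g = p * (a * g) + b * (f * g)" using mab \<mu> by (simp add: algebra_simps)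
      then have "p dvd [:\<mu>:] * g" using pfg by simp
      then show ?thesis using irreducible_poly_dvd_const_mult_cancel \<mu>(2) by blast
    next
      case False
      obtain \<alpha> q where aq: "\<alpha> \<noteq> 0" "smult \<alpha> p = m * q"
        using is_ideal_ideal_pair m(1,2) min left_mem_ideal_pair by (rule ideal_min_degree_pseudo_dvd)
      obtain \<beta> w where bw: "\<beta> \<noteq> 0" "smult \<beta> f = m * w"
        using is_ideal_ideal_pair m(1,2) min right_mem_ideal_pair by (rule ideal_min_degree_pseudo_dvd)
      \<comment> \<open>By irreducibility the cofactor q is a constant, so p and m agree up to constants and m divides f.\<close>
      have "[:\<alpha>:] * p = m * q" using aq(2) by simp
      from irreducible_poly_const_mult_eq[OF aq(1) this] False have "degree q = 0" by simp
      then obtain \<kappa> where \<kappa>: "q = [:\<kappa>:]" by (metis degree_0_id)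
      have "[:\<kappa> * \<beta>:] * f = smult \<kappa> m * w" using bw(2) by (simp flip: smult_smult)
      also have "smult \<kappa> m = smult \<alpha> p" using aq(2) \<kappa> by simp
      also have "smult \<alpha> p * w = p * ([:\<alpha>:] * w)" by simp
      finally have "p dvd [:\<kappa> * \<beta>:] * f" by (metis dvd_triv_left)
      moreover have "\<kappa> * \<beta> \<noteq> 0" using \<kappa> aq m(2) \<open>p \<noteq> 0\<close> bw(1) by auto
      ultimately have "p dvd f" using irreducible_poly_dvd_const_mult_cancel by blast
      with nf show ?thesis by simp
    qed
  qed simp
qed

end

lemma prime_elem_poly_not_dvd_const_prod:
  fixes p :: "'a::idom poly"
  assumes p: "prime_elem p" "degree p > 0" and C: "C \<noteq> 0"
    and "finite A" and "\<And>q. q \<in> A \<Longrightarrow> \<not> p dvd q"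
  shows "\<not> p dvd [:C:] * (\<Prod>q\<in>A. q ^ m q)"
  using assms(4,5)
proof (induction A rule: finite_induct)
  case empty
  show ?case
  proof
    assume "p dvd [:C:] * (\<Prod>q\<in>{}. q ^ m q)"
    then have "degree p \<le> degree [:C:]" using C by (intro dvd_imp_degree_le) auto
    with p(2) show False by simp
  qed
next
  case (insert q A)
  show ?case
  proof
    assume "p dvd [:C:] * (\<Prod>q\<in>insert q A. q ^ m q)"
    then have "p dvd q ^ m q * ([:C:] * (\<Prod>q\<in>A. q ^ m q))"
      using insert(1,2) by (simp add: mult.left_commute)
    then have "p dvd q ^ m q \<or> p dvd [:C:] * (\<Prod>q\<in>A. q ^ m q)"
      by (rule prime_elem_dvd_multD[OF p(1)])
    then show False using insert p(1) by (auto dest: prime_elem_dvd_power)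
  qed
qed

lemma dvd_prime_power_mult_cancel:
  fixes d :: "'a::idom"
  assumes "prime_elem q" "\<not> q dvd d" "d dvd q ^ k * y"
  shows "d dvd y"
  using assms(3)
proof (induction k)
  case (Suc k)
  then obtain z where z: "q * (q ^ k * y) = d * z" by (auto simp: mult.assoc elim!: dvdE)
  then have "q dvd z" using assms(1,2) by (metis dvd_triv_left prime_elem_dvd_mult_iff)
  then obtain z' where "z = q * z'" by blast
  with z have "q * (q ^ k * y) = q * (d * z')" by (simp add: mult.left_commute)
  then have "q ^ k * y = d * z'" using assms(1) by simp
  then have "d dvd q ^ k * y" by (metis dvd_triv_left)
  then show ?case by (rule Suc.IH)
qed simp

lemma dvd_prime_prod_mult_cancel:
  fixes d :: "'a::idom"
  assumes "finite A" and "\<And>q. q \<in> A \<Longrightarrow> prime_elem q \<and> \<not> q dvd d"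
    and "d dvd x * (\<Prod>q\<in>A. q ^ m q)"
  shows "d dvd x"
  using assms
proof (induction A arbitrary: x rule: finite_induct)
  case (insert q A)
  have "prime_elem q" "\<not> q dvd d" using insert.prems(1)[of q] by simp_all
  moreover have "d dvd q ^ m q * (x * (\<Prod>q\<in>A. q ^ m q))"
    using insert.prems(2) insert.hyps(1,2) by (simp add: mult.left_commute)
  ultimately have "d dvd x * (\<Prod>q\<in>A. q ^ m q)" by (rule dvd_prime_power_mult_cancel)
  then show ?case using insert.prems(1) by (rule insert.IH[rotated]) simp
qed simp

context
  fixes Ps :: "'a::idom poly set"
  assumes fin: "finite Ps"
    and prime: "\<And>p. p \<in> Ps \<Longrightarrow> prime_elem p \<and> degree p > 0"
    and ndvd: "\<And>p q. p \<in> Ps \<Longrightarrow> q \<in> Ps \<Longrightarrow> p \<noteq> q \<Longrightarrow> \<not> p dvd q"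
begin

lemma prod_prime_powers_nonzero: "(\<Prod>q\<in>Ps. q ^ m q) \<noteq> 0"
  using prime fin by (auto simp: prime_elem_def)

lemma prod_prime_powers_remove:
  "p \<in> Ps \<Longrightarrow> (\<Prod>q\<in>Ps. q ^ m q) = p ^ m p * (\<Prod>q\<in>Ps - {p}. q ^ m q)"
  using fin by (rule prod.remove)

lemma prod_prime_powers_Suc:
  assumes "p \<in> Ps"
  shows "(\<Prod>q\<in>Ps. q ^ (m(p := Suc k)) q) = p * (\<Prod>q\<in>Ps. q ^ (m(p := k)) q)"
proof -
  have "(\<Prod>q\<in>Ps - {p}. q ^ (m(p := Suc k)) q) = (\<Prod>q\<in>Ps - {p}. q ^ (m(p := k)) q)"
    by (rule prod.cong) auto
  then show ?thesis using assms by (simp add: prod_prime_powers_remove)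
qed

lemma prime_power_dvd_const_prod_imp_le:
  assumes p: "p \<in> Ps" and C: "C \<noteq> 0" and dvd: "p ^ n dvd [:C:] * (\<Prod>q\<in>Ps. q ^ m q)"
  shows "n \<le> m p"
proof (rule ccontr)
  assume "\<not> n \<le> m p"
  then have n: "n = m p + Suc (n - m p - 1)" by simp
  have p0: "p \<noteq> 0" using prime p by (auto simp: prime_elem_def)
  from dvd obtain z where "[:C:] * (\<Prod>q\<in>Ps. q ^ m q) = p ^ n * z" by blast
  then have "p ^ m p * ([:C:] * (\<Prod>q\<in>Ps - {p}. q ^ m q)) = p ^ m p * (p * (p ^ (n - m p - 1) * z))"
    unfolding prod_prime_powers_remove[OF p]
    by (subst (asm) n) (simp add: power_add mult.assoc mult.left_commute)
  then have "[:C:] * (\<Prod>q\<in>Ps - {p}. q ^ m q) = p * (p ^ (n - m p - 1) * z)"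
    by (rule mult_left_cancel[THEN iffD1, rotated]) (use p0 in simp)
  then have "p dvd [:C:] * (\<Prod>q\<in>Ps - {p}. q ^ m q)" by (metis dvd_triv_left)
  then show False
    using prime_elem_poly_not_dvd_const_prod[of p C "Ps - {p}"] prime[OF p] C fin ndvd p by blast
qed

lemma dvd_const_prod_prime_powers_imp:
  assumes C: "C \<noteq> 0" and "d dvd [:C:] * (\<Prod>q\<in>Ps. q ^ m q)"
  shows "\<exists>u f. u \<noteq> 0 \<and> d = [:u:] * (\<Prod>q\<in>Ps. q ^ f q) \<and> (\<forall>q\<in>Ps. f q \<le> m q)"
  using assms(2)
proof (induction "degree d" arbitrary: d m rule: less_induct)
  case less
  have d0: "d \<noteq> 0" using less.prems C prod_prime_powers_nonzero by auto
  show ?case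
  proof (cases "\<exists>p\<in>Ps. p dvd d")
    case True
    then obtain p d1 where p: "p \<in> Ps" and d: "d = p * d1" by blast
    have p0: "p \<noteq> 0" using prime p by (auto simp: prime_elem_def)
    have "d1 \<noteq> 0" using d d0 by auto
    then have deg: "degree d1 < degree d" using d p0 prime[OF p] by (simp add: degree_mult_eq)
    have "p dvd d" using d by simp
    then have "p ^ 1 dvd [:C:] * (\<Prod>q\<in>Ps. q ^ m q)" using dvd_trans less.prems by simp
    then have m1: "1 \<le> m p" by (rule prime_power_dvd_const_prod_imp_le[OF p C])
    define m' where "m' = m(p := m p - 1)"
    have "m = m'(p := Suc (m p - 1))" using m1 unfolding m'_def by auto
    then have m: "(\<Prod>q\<in>Ps. q ^ m q) = p * (\<Prod>q\<in>Ps. q ^ m' q)"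
      using prod_prime_powers_Suc[OF p, of m' "m p - 1"] by (simp add: m'_def)
    from less.prems obtain z where "[:C:] * (\<Prod>q\<in>Ps. q ^ m q) = d * z" by blast
    then have "p * ([:C:] * (\<Prod>q\<in>Ps. q ^ m' q)) = p * (d1 * z)"
      unfolding m d by (simp only: mult.assoc mult.left_commute)
    then have "[:C:] * (\<Prod>q\<in>Ps. q ^ m' q) = d1 * z" using p0 mult_left_cancel by blast
    then have "d1 dvd [:C:] * (\<Prod>q\<in>Ps. q ^ m' q)" by (metis dvd_triv_left)
    from less.hyps[OF deg this] obtain u f where
      uf: "u \<noteq> 0" "d1 = [:u:] * (\<Prod>q\<in>Ps. q ^ f q)" "\<forall>q\<in>Ps. f q \<le> m' q" by blast
    have "d = [:u:] * (\<Prod>q\<in>Ps. q ^ (f(p := Suc (f p))) q)"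
      using prod_prime_powers_Suc[OF p, of f "f p"] d uf(2) by (simp add: mult.left_commute)
    moreover have "\<forall>q\<in>Ps. (f(p := Suc (f p))) q \<le> m q" using uf(3) m1 unfolding m'_def by auto
    ultimately show ?thesis using uf(1) by blast
  next
    case False
    then have "d dvd [:C:]"
      using prime by (intro dvd_prime_prod_mult_cancel[OF fin _ less.prems]) auto
    then have "degree d = 0" using dvd_imp_degree_le[of d "[:C:]"] C by simp
    then have "d = [:coeff d 0:]" "coeff d 0 \<noteq> 0" using d0 by (auto dest: degree_0_id)
    then show ?thesis by (intro exI[of _ "coeff d 0"] exI[of _ "\<lambda>_. 0"]) simp
  qed
qed

text \<open>The exponent bound f p + k p \<le> e p is what makes the exponents e p - f p at least as
  large as those of a given desingularized operator.\<close>
lemma mult_prod_prime_powers_eq_imp: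
  assumes C: "C \<noteq> 0" and eq: "d * z * (\<Prod>q\<in>Ps. q ^ k q) = [:C:] * (\<Prod>q\<in>Ps. q ^ e q)"
  obtains u f where "u \<noteq> 0" "d = [:u:] * (\<Prod>q\<in>Ps. q ^ f q)" "\<And>q. q \<in> Ps \<Longrightarrow> f q + k q \<le> e q"
proof -
  have "d dvd [:C:] * (\<Prod>q\<in>Ps. q ^ e q)" unfolding eq[symmetric] by (simp add: mult.assoc)
  then obtain u f where uf: "u \<noteq> 0" "d = [:u:] * (\<Prod>q\<in>Ps. q ^ f q)" "\<forall>q\<in>Ps. f q \<le> e q"
    using dvd_const_prod_prime_powers_imp[OF C] by blast
  have "f q + k q \<le> e q" if q: "q \<in> Ps" for q
  proof -
    have "q ^ f q * q ^ k q dvd (\<Prod>q\<in>Ps. q ^ f q) * (\<Prod>q\<in>Ps. q ^ k q)"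
      using fin q by (intro mult_dvd_mono dvd_prodI) auto
    also have "\<dots> dvd [:C:] * (\<Prod>q\<in>Ps. q ^ e q)"
      unfolding eq[symmetric] uf(2) by (rule dvdI[where k = "[:u:] * z"]) (simp add: ac_simps)
    finally have "q ^ (f q + k q) dvd [:C:] * (\<Prod>q\<in>Ps. q ^ e q)" by (simp add: power_add)
    then show ?thesis by (rule prime_power_dvd_const_prod_imp_le[OF q C])
  qed
  with uf(1,2) show thesis by (rule that)
qed

end

section \<open>The twist and the twisted derivation on R[x]\<close>

lemma sigmaR_add: "sigmaR g t (p + q) = sigmaR g t p + sigmaR g t q"
  by (simp add: sigmaR_def pcompose_add)

lemma sigmaR_mult: "sigmaR g t (p * q) = sigmaR g t p * sigmaR g t q"
  by (simp add: sigmaR_def pcompose_mult)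

lemma sigmaR_smult: "sigmaR g t (smult c p) = smult c (sigmaR g t p)"
  by (simp add: sigmaR_def pcompose_smult)

lemma sigmaR_0 [simp]: "sigmaR g t 0 = 0"
  by (simp add: sigmaR_def)

lemma sigmaR_1 [simp]: "sigmaR g t 1 = 1"
  by (simp add: sigmaR_def pcompose_1)

lemma degree_sigmaR: "g \<noteq> 0 \<Longrightarrow> degree (sigmaR g t p) = degree p"
  for g t :: "'a::idom"
  by (simp add: sigmaR_def degree_pcompose)

lemma sigmaR_eq_0_iff: "g \<noteq> 0 \<Longrightarrow> sigmaR g t p = 0 \<longleftrightarrow> p = 0"
  for g t :: "'a::idom"
  by (simp add: sigmaR_def pcompose_eq_0_iff)

definition deltaR_xpow :: "'a::idom \<Rightarrow> 'a \<Rightarrow> 'a poly \<Rightarrow> nat \<Rightarrow> 'a poly" where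
  "deltaR_xpow g t dx n = (\<Sum>i<n. [:t, g:] ^ i * dx * [:0, 1:] ^ (n - 1 - i))"

lemma deltaR_xpow_Suc:
  "deltaR_xpow g t dx (Suc n) = [:t, g:] * deltaR_xpow g t dx n + dx * [:0, 1:] ^ n"
proof -
  have "deltaR_xpow g t dx (Suc n) = (\<Sum>i<Suc n. [:t, g:] ^ i * dx * [:0, 1:] ^ (n - i))"
    by (simp add: deltaR_xpow_def)
  also have "\<dots> = dx * [:0, 1:] ^ n + (\<Sum>i<n. [:t, g:] ^ Suc i * dx * [:0, 1:] ^ (n - Suc i))"
    by (subst sum.lessThan_Suc_shift) simp
  also have "(\<Sum>i<n. [:t, g:] ^ Suc i * dx * [:0, 1:] ^ (n - Suc i)) = [:t, g:] * deltaR_xpow g t dx n"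
    unfolding deltaR_xpow_def sum_distrib_left power_Suc mult.assoc
    by (rule sum.cong) (simp_all add: diff_diff_left)
  finally show ?thesis by (simp add: add.commute)
qed

lemma deltaR_eq_sum:
  assumes "degree p \<le> N"
  shows "deltaR g t dx p = (\<Sum>n\<le>N. smult (coeff p n) (deltaR_xpow g t dx n))"
  unfolding deltaR_def deltaR_xpow_def[symmetric]
  by (rule sum.mono_neutral_left) (use assms in \<open>auto simp: coeff_eq_0\<close>)

lemma deltaR_add: "deltaR g t dx (p + q) = deltaR g t dx p + deltaR g t dx q"
proof -
  define N where "N = max (degree p) (degree q)"
  have "degree (p + q) \<le> N" "degree p \<le> N" "degree q \<le> N"
    unfolding N_def by (auto intro: degree_add_le)
  then show ?thesis by (simp add: deltaR_eq_sum[of _ N] smult_add_left sum.distrib)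
qed

lemma smult_sum_right: "smult c (\<Sum>i\<in>A. f i) = (\<Sum>i\<in>A. smult c (f i))"
  by (induction A rule: infinite_finite_induct) (auto simp: smult_add_right)

lemma deltaR_smult: "deltaR g t dx (smult c p) = smult c (deltaR g t dx p)"
  using degree_smult_le[of c p]
  by (simp add: deltaR_eq_sum[of _ "degree p"] smult_sum_right)

lemma deltaR_const [simp]: "deltaR g t dx [:c:] = 0"
  by (simp add: deltaR_def)

lemma deltaR_0 [simp]: "deltaR g t dx 0 = 0"
  by (simp add: deltaR_def)

lemma deltaR_1 [simp]: "deltaR g t dx 1 = 0"
  by (simp add: deltaR_def)

lemma deltaR_pCons_0: "deltaR g t dx (pCons 0 r) = [:t, g:] * deltaR g t dx r + dx * r"
proof -
  have "deltaR g t dx (pCons 0 r) =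
      (\<Sum>n\<le>Suc (degree r). smult (coeff (pCons 0 r) n) (deltaR_xpow g t dx n))"
    by (rule deltaR_eq_sum) (simp add: degree_pCons_le)
  also have "\<dots> = (\<Sum>n\<le>degree r. smult (coeff r n) (deltaR_xpow g t dx (Suc n)))"
    by (subst sum.atMost_Suc_shift) (simp add: deltaR_xpow_def)
  also have "\<dots> = (\<Sum>n\<le>degree r. [:t, g:] * smult (coeff r n) (deltaR_xpow g t dx n)) +
      (\<Sum>n\<le>degree r. dx * monom (coeff r n) n)"
    by (simp add: deltaR_xpow_Suc smult_add_right monom_altdef sum.distrib)
  also have "\<dots> = [:t, g:] * deltaR g t dx r + dx * r"
    by (simp only: deltaR_eq_sum[OF order_refl] sum_distrib_left[symmetric] poly_as_sum_of_monoms)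
  finally show ?thesis .
qed

lemma deltaR_mult:
  "deltaR g t dx (p * q) = sigmaR g t p * deltaR g t dx q + deltaR g t dx p * q"
proof (induction p)
  case (pCons a p)
  have "pCons a p * q = smult a q + pCons 0 (p * q)" by simp
  then have "deltaR g t dx (pCons a p * q) =
      smult a (deltaR g t dx q) + [:t, g:] * deltaR g t dx (p * q) + dx * (p * q)"
    by (simp add: deltaR_add deltaR_smult deltaR_pCons_0)
  moreover have "sigmaR g t (pCons a p) = [:a:] + [:t, g:] * sigmaR g t p"
    by (simp add: sigmaR_def pcompose_pCons)
  moreover have "deltaR g t dx (pCons a p) = [:t, g:] * deltaR g t dx p + dx * p"
    using deltaR_add[of g t dx "[:a:]" "pCons 0 p"] by (simp add: deltaR_pCons_0)
  ultimately show ?case using pCons.IH by (simp add: algebra_simps)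
qed simp

text \<open>This symmetry of the twisted Leibniz rule is what makes the quotient rule on
  Q_R(x) independent of the chosen representative.\<close>
lemma deltaR_sigmaR_symmetric:
  "deltaR g t dx p * (sigmaR g t q - q) = deltaR g t dx q * (sigmaR g t p - p)"
  using deltaR_mult[of g t dx p q] deltaR_mult[of g t dx q p]
  by (simp add: algebra_simps)

section \<open>Extension to the rational functions Q_R(x)\<close>

context
  fixes g t :: "'a::idom" and dx :: "'a poly"
  assumes g0: "g \<noteq> 0"
begin

abbreviation "sR \<equiv> sigmaR g t"
abbreviation "dR \<equiv> deltaR g t dx"
abbreviation "sK \<equiv> sigmaK g t"
abbreviation "dK \<equiv> deltaK g t dx"

lemma sigmaR_nonzero: "b \<noteq> 0 \<Longrightarrow> sR b \<noteq> 0"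
  using sigmaR_eq_0_iff[OF g0] by blast

lemma sigmaK_Fract:
  assumes b: "b \<noteq> 0"
  shows "sK (Fract a b) = Fract (sR a) (sR b)"
  unfolding sigmaK_def
proof (rule someI2[where a = "Fract (sR a) (sR b)"])
  fix r assume "\<exists>a' b'. b' \<noteq> 0 \<and> Fract a b = Fract a' b' \<and> r = Fract (sR a') (sR b')"
  then obtain a' b' where h: "b' \<noteq> 0" "Fract a b = Fract a' b'" "r = Fract (sR a') (sR b')"
    by blast
  from h(2) b h(1) have "a * b' = a' * b" by (simp add: eq_fract)
  then have "sR a * sR b' = sR a' * sR b" by (metis sigmaR_mult)
  then show "r = Fract (sR a) (sR b)" using h b sigmaR_nonzero by (simp add: eq_fract)
qed (use b in blast)

definition delta_quotient :: "'a poly \<Rightarrow> 'a poly \<Rightarrow> 'a poly fract" where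
  "delta_quotient a b = Fract (dR a * b - a * dR b) (b * sR b)"

lemma delta_quotient_mult_cancel:
  assumes b: "b \<noteq> 0" and c: "c \<noteq> 0"
  shows "delta_quotient (a * c) (b * c) = delta_quotient a b"
proof -
  have "b * c * sR (b * c) \<noteq> 0" "b * sR b \<noteq> 0" using b c sigmaR_nonzero by auto
  moreover have "(dR (a * c) * (b * c) - a * c * dR (b * c)) * (b * sR b) =
      (dR a * b - a * dR b) * (b * c * sR (b * c))"
    unfolding deltaR_mult sigmaR_mult
    using deltaR_sigmaR_symmetric[of g t dx a c] deltaR_sigmaR_symmetric[of g t dx b c] by algebra
  ultimately show ?thesis unfolding delta_quotient_def by (simp add: eq_fract)
qed

lemma delta_quotient_cong:
  assumes "b \<noteq> 0" "b' \<noteq> 0" "Fract a b = Fract a' b'"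
  shows "delta_quotient a b = delta_quotient a' b'"
proof -
  have e: "a * b' = a' * b" using assms by (simp add: eq_fract)
  have "delta_quotient a b = delta_quotient (a * b') (b * b')" using assms by (simp add: delta_quotient_mult_cancel)
  also have "\<dots> = delta_quotient (a' * b) (b' * b)" by (simp add: e mult.commute)
  also have "\<dots> = delta_quotient a' b'" using assms by (simp add: delta_quotient_mult_cancel)
  finally show ?thesis .
qed

lemma deltaK_Fract:
  assumes b: "b \<noteq> 0"
  shows "dK (Fract a b) = delta_quotient a b"
  unfolding deltaK_def delta_quotient_def[symmetric]
proof (rule someI2[where a = "delta_quotient a b"])
  fix r assume "\<exists>a' b'. b' \<noteq> 0 \<and> Fract a b = Fract a' b' \<and> r = delta_quotient a' b'"
  then show "r = delta_quotient a b" using delta_quotient_cong[OF b] by metis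
qed (use b in blast)

lemma sigmaK_to_fract [simp]: "sK (to_fract p) = to_fract (sR p)"
  by (simp add: to_fract_def sigmaK_Fract)

lemma deltaK_to_fract [simp]: "dK (to_fract p) = to_fract (dR p)"
  by (simp add: to_fract_def deltaK_Fract delta_quotient_def)

lemma sigmaK_0 [simp]: "sK 0 = 0"
  using sigmaK_to_fract[of 0] by simp

lemma deltaK_0 [simp]: "dK 0 = 0"
  using deltaK_to_fract[of 0] by simp

lemma sigmaK_add: "sK (x + y) = sK x + sK y"
proof -
  obtain a b c d where "x = Fract a b" "b \<noteq> 0" "y = Fract c d" "d \<noteq> 0"
    by (cases x, cases y) blast
  then show ?thesis using sigmaR_nonzero by (simp add: sigmaK_Fract sigmaR_add sigmaR_mult)
qed

lemma sigmaK_mult: "sK (x * y) = sK x * sK y"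
proof -
  obtain a b c d where "x = Fract a b" "b \<noteq> 0" "y = Fract c d" "d \<noteq> 0"
    by (cases x, cases y) blast
  then show ?thesis using sigmaR_nonzero by (simp add: sigmaK_Fract sigmaR_mult)
qed

lemma sigmaK_eq_0_iff: "sK x = 0 \<longleftrightarrow> x = 0"
proof -
  obtain a b where "x = Fract a b" "b \<noteq> 0" by (cases x)
  then show ?thesis
    using sigmaR_nonzero sigmaR_eq_0_iff[OF g0] by (simp add: sigmaK_Fract eq_fract Zero_fract_def)
qed

lemma inj_sigmaK: "inj sK"
proof (rule injI)
  fix x y assume "sK x = sK y"
  then have "sK (x - y) = 0" using sigmaK_add[of "x - y" y] by simp
  then show "x = y" by (simp add: sigmaK_eq_0_iff)
qed

lemma deltaK_add: "dK (x + y) = dK x + dK y"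
proof -
  obtain a b c d where x: "x = Fract a b" "b \<noteq> 0" and y: "y = Fract c d" "d \<noteq> 0"
    by (cases x, cases y) blast
  have "b * d * sR (b * d) \<noteq> 0" "b * sR b * (d * sR d) \<noteq> 0" using x y sigmaR_nonzero by auto
  moreover have "(dR (a * d + c * b) * (b * d) - (a * d + c * b) * dR (b * d)) * (b * sR b * (d * sR d)) =
    ((dR a * b - a * dR b) * (d * sR d) + (dR c * d - c * dR d) * (b * sR b)) * (b * d * sR (b * d))"
    unfolding deltaR_add deltaR_mult sigmaR_mult
    using deltaR_sigmaR_symmetric[of g t dx a d] deltaR_sigmaR_symmetric[of g t dx c b]
      deltaR_sigmaR_symmetric[of g t dx b d]
    by algebra
  ultimately show ?thesis using x y sigmaR_nonzero by (simp add: deltaK_Fract delta_quotient_def eq_fract)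
qed

lemma deltaK_mult: "dK (x * y) = sK x * dK y + dK x * y"
proof -
  obtain a b c d where x: "x = Fract a b" "b \<noteq> 0" and y: "y = Fract c d" "d \<noteq> 0"
    by (cases x, cases y) blast
  have "b * d * sR (b * d) \<noteq> 0" "sR b * (d * sR d) \<noteq> 0" "b * sR b * d \<noteq> 0"
    using x y sigmaR_nonzero by auto
  moreover have "(dR (a * c) * (b * d) - a * c * dR (b * d)) * (sR b * (d * sR d) * (b * sR b * d)) =
    ((sR a * (dR c * d - c * dR d)) * (b * sR b * d) +
      ((dR a * b - a * dR b) * c) * (sR b * (d * sR d))) * (b * d * sR (b * d))"
    unfolding deltaR_mult sigmaR_mult
    using deltaR_sigmaR_symmetric[of g t dx a d] deltaR_sigmaR_symmetric[of g t dx c b]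
      deltaR_sigmaR_symmetric[of g t dx b d] deltaR_sigmaR_symmetric[of g t dx a c]
    by algebra
  ultimately show ?thesis using x y sigmaR_nonzero
    by (simp add: deltaK_Fract delta_quotient_def sigmaK_Fract eq_fract)
qed

end

section \<open>Left multiplication by the Ore variable\<close>

context
  fixes g t :: "'a::idom" and dx :: "'a poly"
  assumes g0: "g \<noteq> 0"
begin

abbreviation "lD \<equiv> lmulD g t dx"
abbreviation "om \<equiv> ore_mult g t dx"

lemma coeff_lmulD:
  "coeff (lD P) n = (if n = 0 then 0 else sigmaK g t (coeff P (n - 1))) + deltaK g t dx (coeff P n)"
  by (simp add: lmulD_def coeff_pCons' coeff_map_poly g0)

lemma lmulD_0 [simp]: "lD 0 = 0"
  by (rule poly_eqI) (simp add: coeff_lmulD g0)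

lemma lmulD_add: "lD (P + Q) = lD P + lD Q"
  by (rule poly_eqI) (simp add: coeff_lmulD sigmaK_add deltaK_add g0 algebra_simps)

lemma lmulD_smult: "lD (smult a P) = smult (sigmaK g t a) (lD P) + smult (deltaK g t dx a) P"
  by (rule poly_eqI) (simp add: coeff_lmulD sigmaK_mult deltaK_mult g0 algebra_simps)

lemma lmulD_monom: "lD (monom c i) = monom (sigmaK g t c) (Suc i) + monom (deltaK g t dx c) i"
  by (rule poly_eqI) (auto simp: coeff_lmulD coeff_monom g0)

lemma lmulD_sum: "lD (\<Sum>i\<in>A. f i) = (\<Sum>i\<in>A. lD (f i))"
  by (induction A rule: infinite_finite_induct) (simp_all add: lmulD_add)

lemma ore_mult_eq_sum:
  assumes "degree Q \<le> N"
  shows "om Q L = (\<Sum>i\<le>N. smult (coeff Q i) ((lD ^^ i) L))"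
  unfolding ore_mult_def
  by (rule sum.mono_neutral_left) (use assms in \<open>auto simp: coeff_eq_0\<close>)

lemma ore_mult_0 [simp]: "om 0 L = 0"
  by (simp add: ore_mult_def)

lemma ore_mult_add: "om (P + Q) L = om P L + om Q L"
proof -
  define N where "N = max (degree P) (degree Q)"
  have "degree (P + Q) \<le> N" "degree P \<le> N" "degree Q \<le> N"
    unfolding N_def by (auto intro: degree_add_le)
  then show ?thesis by (simp add: ore_mult_eq_sum[of _ N] smult_add_left sum.distrib)
qed

lemma ore_mult_smult: "om (smult c Q) L = smult c (om Q L)"
  using degree_smult_le[of c Q]
  by (simp add: ore_mult_eq_sum[of _ "degree Q"] ore_mult_def smult_sum_right)

lemma ore_mult_monom: "om (monom c i) L = smult c ((lD ^^ i) L)"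
proof -
  have "om (monom c i) L = (\<Sum>n\<le>i. smult (coeff (monom c i) n) ((lD ^^ n) L))"
    by (rule ore_mult_eq_sum) (rule degree_monom_le)
  also have "\<dots> = smult c ((lD ^^ i) L)"
    by (subst sum.remove[of _ i]) (auto simp: coeff_monom intro!: sum.neutral)
  finally show ?thesis .
qed

lemma ore_mult_sum: "om (\<Sum>i\<in>A. f i) L = (\<Sum>i\<in>A. om (f i) L)"
  by (induction A rule: infinite_finite_induct) (simp_all add: ore_mult_add)

lemma lmulD_ore_mult: "lD (om Q L) = om (lD Q) L"
proof -
  have "lD (om Q L) = lD (\<Sum>i\<le>degree Q. om (monom (coeff Q i) i) L)"
    by (simp add: ore_mult_sum[symmetric] poly_as_sum_of_monoms)
  also have "\<dots> = (\<Sum>i\<le>degree Q. om (lD (monom (coeff Q i) i)) L)"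
    unfolding lmulD_sum
    by (rule sum.cong) (simp_all add: ore_mult_monom lmulD_smult lmulD_monom ore_mult_add)
  also have "\<dots> = om (lD Q) L"
    by (simp add: ore_mult_sum[symmetric] lmulD_sum[symmetric] poly_as_sum_of_monoms)
  finally show ?thesis .
qed

lemma degree_lmulD:
  assumes "P \<noteq> 0"
  shows "degree (lD P) = Suc (degree P)" and "lead_coeff (lD P) = sigmaK g t (lead_coeff P)"
proof -
  have c: "coeff (lD P) (Suc (degree P)) = sigmaK g t (lead_coeff P)"
    by (simp add: coeff_lmulD coeff_eq_0 g0)
  moreover have "sigmaK g t (lead_coeff P) \<noteq> 0" using assms sigmaK_eq_0_iff[OF g0] by simp
  ultimately have "Suc (degree P) \<le> degree (lD P)" by (intro le_degree) simp
  moreover have "degree (lD P) \<le> Suc (degree P)"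
    by (rule degree_le) (auto simp: coeff_lmulD coeff_eq_0 g0)
  ultimately show d: "degree (lD P) = Suc (degree P)" by simp
  show "lead_coeff (lD P) = sigmaK g t (lead_coeff P)" unfolding d by (rule c)
qed

lemma in_RxD_lmulD:
  assumes "in_RxD P"
  shows "in_RxD (lD P)"
  unfolding in_RxD_def
proof
  fix n
  obtain p1 p2 where "coeff P (n - 1) = to_fract p1" "coeff P n = to_fract p2"
    using assms unfolding in_RxD_def by (metis rangeE)
  then have "coeff (lD P) n = to_fract ((if n = 0 then 0 else sigmaR g t p1) + deltaR g t dx p2)"
    by (simp add: coeff_lmulD g0)
  then show "coeff (lD P) n \<in> range to_fract" by (simp only: rangeI)
qed

lemma lmulD_in_cont: "P \<in> cont g t dx L \<Longrightarrow> lD P \<in> cont g t dx L"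
  unfolding cont_def using in_RxD_lmulD lmulD_ore_mult by blast

lemma add_in_cont: "P \<in> cont g t dx L \<Longrightarrow> Q \<in> cont g t dx L \<Longrightarrow> P + Q \<in> cont g t dx L"
  unfolding cont_def in_RxD_def
  by (auto simp: ore_mult_add intro!: exI[of _ "_ + _"]) (metis rangeE rangeI to_fract_add)

lemma smult_in_cont: "P \<in> cont g t dx L \<Longrightarrow> smult (to_fract c) P \<in> cont g t dx L"
  unfolding cont_def in_RxD_def
  by (auto simp: ore_mult_smult[symmetric]) (metis rangeE rangeI to_fract_mult)

lemma lmulD_funpow:
  assumes "P \<in> cont g t dx L" "P \<noteq> 0"
  shows "(lD ^^ m) P \<in> cont g t dx L \<and> (lD ^^ m) P \<noteq> 0 \<and> degree ((lD ^^ m) P) = degree P + m \<and>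
    lead_coeff ((lD ^^ m) P) = (sigmaK g t ^^ m) (lead_coeff P)"
proof (induction m)
  case (Suc m)
  then have "(lD ^^ m) P \<in> cont g t dx L" "(lD ^^ m) P \<noteq> 0" by blast+
  with Suc.IH show ?case
    using degree_lmulD[of "(lD ^^ m) P"] lmulD_in_cont by force
qed (use assms in simp)

end

lemma funpow_sigmaR_mult: "(sigmaR g t ^^ k) (p * q) = (sigmaR g t ^^ k) p * (sigmaR g t ^^ k) q"
  by (induction k) (simp_all add: sigmaR_mult)

lemma funpow_sigmaR_smult: "(sigmaR g t ^^ k) (smult c p) = smult c ((sigmaR g t ^^ k) p)"
  by (induction k) (simp_all add: sigmaR_smult)

lemma degree_funpow_sigmaR: "g \<noteq> 0 \<Longrightarrow> degree ((sigmaR g t ^^ k) p) = degree p"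
  for g t :: "'a::idom"
  by (induction k) (simp_all add: degree_sigmaR)

lemma funpow_sigmaR_eq_0_iff: "g \<noteq> 0 \<Longrightarrow> (sigmaR g t ^^ k) p = 0 \<longleftrightarrow> p = 0"
  for g t :: "'a::idom"
  by (induction k) (simp_all add: sigmaR_eq_0_iff)

lemma funpow_sigmaK_to_fract:
  "g \<noteq> 0 \<Longrightarrow> (sigmaK g t ^^ k) (to_fract p) = to_fract ((sigmaR g t ^^ k) p)"
  for g t :: "'a::idom"
  by (induction k) simp_all

context
  fixes g t g' :: "'a::idom"
  assumes inverse: "g * g' = 1"
begin

lemma nonzero: "g \<noteq> 0" "g' \<noteq> 0"
  using inverse by auto

abbreviation "sigmaR_inv \<equiv> sigmaR g' (- (g' * t))"

lemma sigmaR_sigmaR_inv: "sigmaR g t (sigmaR_inv p) = p"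
proof -
  have "pcompose [:- (g' * t), g':] [:t, g:] = [:0, 1:]"
    using inverse by (simp add: pcompose_pCons algebra_simps)
  then show ?thesis unfolding sigmaR_def by (simp add: pcompose_assoc[symmetric])
qed

lemma inv_sigmaK_sigmaK: "inv (sigmaK g t) (sigmaK g t x) = x"
  using inj_sigmaK[OF nonzero(1)] by (simp add: inv_f_f)

lemma funpow_inv_sigmaK_to_fract:
  "(inv (sigmaK g t) ^^ k) (to_fract p) = to_fract ((sigmaR_inv ^^ k) p)"
proof (induction k)
  case (Suc k)
  have "inv (sigmaK g t) (to_fract q) = to_fract (sigmaR_inv q)" for q
    using inv_sigmaK_sigmaK[of "to_fract (sigmaR_inv q)"] nonzero(1) by (simp add: sigmaR_sigmaR_inv)
  with Suc.IH show ?case by simp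
qed simp

lemma funpow_inv_sigmaK_funpow_sigmaK:
  "(inv (sigmaK g t) ^^ a) ((sigmaK g t ^^ b) x) =
     (if a \<le> b then (sigmaK g t ^^ (b - a)) x else (inv (sigmaK g t) ^^ (a - b)) x)"
proof (induction a arbitrary: b)
  case (Suc a)
  show ?case
  proof (cases "a < b")
    case True
    then have "(sigmaK g t ^^ (b - a)) x = sigmaK g t ((sigmaK g t ^^ (b - Suc a)) x)"
      by (metis Suc_diff_Suc funpow.simps(2) o_apply)
    then show ?thesis using Suc True by (simp add: inv_sigmaK_sigmaK)
  next
    case False
    then show ?thesis using Suc by (cases "a = b") (simp_all add: Suc_diff_le)
  qed
qed simp

lemma sigma_pow_funpow_sigmaK: "sigma_pow g t n ((sigmaK g t ^^ m) x) = sigma_pow g t (n + int m) x"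
proof (cases "0 \<le> n")
  case True
  then have "nat (n + int m) = nat n + m" by simp
  then show ?thesis using True by (simp add: sigma_pow_def funpow_add)
next
  case False
  moreover have "nat (- n) \<le> m \<Longrightarrow> m - nat (- n) = nat (n + int m)" using False by linarith
  moreover have "\<not> nat (- n) \<le> m \<Longrightarrow> nat (- n) - m = nat (- (n + int m))" using False by linarith
  ultimately show ?thesis by (auto simp: sigma_pow_def funpow_inv_sigmaK_funpow_sigmaK)
qed

definition sigmaR_int :: "int \<Rightarrow> 'a poly \<Rightarrow> 'a poly" where
  "sigmaR_int n p = (if 0 \<le> n then (sigmaR g t ^^ nat n) p else (sigmaR_inv ^^ nat (- n)) p)"

lemma sigma_pow_to_fract: "sigma_pow g t n (to_fract p) = to_fract (sigmaR_int n p)"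
  by (simp add: sigma_pow_def sigmaR_int_def funpow_sigmaK_to_fract nonzero funpow_inv_sigmaK_to_fract)

lemma sigmaR_int_mult: "sigmaR_int n (p * q) = sigmaR_int n p * sigmaR_int n q"
  by (simp add: sigmaR_int_def funpow_sigmaR_mult)

lemma sigmaR_int_smult: "sigmaR_int n (smult c p) = smult c (sigmaR_int n p)"
  by (simp add: sigmaR_int_def funpow_sigmaR_smult)

lemma sigmaR_int_eq_0_iff: "sigmaR_int n p = 0 \<longleftrightarrow> p = 0"
  using nonzero by (simp add: sigmaR_int_def funpow_sigmaR_eq_0_iff)

end

lemma zero_in_Mk:
  fixes g t :: "'a::idom"
  assumes "g \<noteq> 0"
  shows "0 \<in> Mk g t dx L k"
proof -
  have "in_RxD (0 :: 'a poly fract poly)" unfolding in_RxD_def by (metis coeff_0 rangeI to_fract_0)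
  then show ?thesis using ore_mult_0[OF assms] by (auto simp: Mk_def cont_def)
qed

lemma mem_coeff_ideal_iff:
  fixes g t :: "'a::idom"
  assumes "g \<noteq> 0"
  shows "p \<in> coeff_ideal g t dx L k \<longleftrightarrow> (\<exists>P\<in>Mk g t dx L k. to_fract p = coeff P k)"
proof -
  have "\<exists>P\<in>Mk g t dx L k. to_fract 0 = coeff P k" using zero_in_Mk[OF assms] by force
  then show ?thesis unfolding coeff_ideal_def by blast
qed

lemma is_ideal_coeff_ideal:
  fixes g t :: "'a::idom"
  assumes g0: "g \<noteq> 0"
  shows "is_ideal (coeff_ideal g t dx L k)"
proof (rule is_idealI)
  show "0 \<in> coeff_ideal g t dx L k" by (simp add: coeff_ideal_def)
next
  fix p q assume "p \<in> coeff_ideal g t dx L k" "q \<in> coeff_ideal g t dx L k"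
  then obtain P Q where "P \<in> Mk g t dx L k" "to_fract p = coeff P k"
    and "Q \<in> Mk g t dx L k" "to_fract q = coeff Q k"
    using mem_coeff_ideal_iff[OF g0] by blast
  moreover from this have "P + Q \<in> Mk g t dx L k"
    using add_in_cont[OF g0] degree_add_le by (auto simp: Mk_def)
  ultimately show "p + q \<in> coeff_ideal g t dx L k"
    using mem_coeff_ideal_iff[OF g0] by (metis coeff_add to_fract_add)
next
  fix p r assume "p \<in> coeff_ideal g t dx L k"
  then obtain P where "P \<in> Mk g t dx L k" "to_fract p = coeff P k"
    using mem_coeff_ideal_iff[OF g0] by blast
  moreover from this have "smult (to_fract r) P \<in> Mk g t dx L k"
    using smult_in_cont[OF g0] degree_smult_le[of _ P] by (auto simp: Mk_def)
  ultimately show "r * p \<in> coeff_ideal g t dx L k"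
    using mem_coeff_ideal_iff[OF g0] by (metis coeff_smult to_fract_mult)
qed

text \<open>Left multiplication by a power of the Ore variable lifts P to order exactly k.\<close>
lemma funpow_sigmaR_lead_coeff_mem_coeff_ideal:
  fixes g t :: "'a::idom"
  assumes g0: "g \<noteq> 0" and P: "P \<in> Mk g t dx L k" "P \<noteq> 0" and lc: "lead_coeff P = to_fract p"
  shows "(sigmaR g t ^^ (k - degree P)) p \<in> coeff_ideal g t dx L k"
proof -
  let ?P = "(lmulD g t dx ^^ (k - degree P)) P"
  have "P \<in> cont g t dx L" "degree P \<le> k" using P(1) by (auto simp: Mk_def)
  with lmulD_funpow[OF g0 this(1) P(2), of "k - degree P"]
  have "?P \<in> Mk g t dx L k" "coeff ?P k = to_fract ((sigmaR g t ^^ (k - degree P)) p)"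
    by (auto simp: Mk_def lc funpow_sigmaK_to_fract g0)
  then show ?thesis using mem_coeff_ideal_iff[OF g0] by metis
qed

lemma sigma_pow_lead_coeff_eq:
  assumes inverse: "g * g' = 1" and "degree P \<le> k" and lc: "lead_coeff P = to_fract p"
  shows "sigma_pow g t (int n - int (degree P)) (lead_coeff P) =
    to_fract (sigmaR_int g t g' (int n - int k) ((sigmaR g t ^^ (k - degree P)) p))"
proof -
  have g0: "g \<noteq> 0" using inverse by auto
  have "to_fract (sigmaR_int g t g' (int n - int k) ((sigmaR g t ^^ (k - degree P)) p)) =
      sigma_pow g t (int n - int k) ((sigmaK g t ^^ (k - degree P)) (to_fract p))"
    by (simp add: sigma_pow_to_fract[OF inverse] funpow_sigmaK_to_fract g0)
  also have "\<dots> = sigma_pow g t (int n - int (degree P)) (lead_coeff P)"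
    using assms(2) by (simp add: sigma_pow_funpow_sigmaK[OF inverse] lc of_nat_diff)
  finally show ?thesis ..
qed

lemma to_fract_eq_frac_iff:
  fixes x y z :: "'a::idom poly"
  assumes "b \<noteq> 0" "y \<noteq> 0"
  shows "to_fract x = to_fract [:a:] / (to_fract [:b:] * to_fract y) * to_fract z \<longleftrightarrow>
    x * ([:b:] * y) = [:a:] * z"
proof -
  have nz: "to_fract [:b:] * to_fract y \<noteq> 0" using assms by simp
  have "to_fract x = to_fract [:a:] / (to_fract [:b:] * to_fract y) * to_fract z \<longleftrightarrow>
      to_fract x * (to_fract [:b:] * to_fract y) = to_fract [:a:] * to_fract z"
    by (simp only: times_divide_eq_left nonzero_eq_divide_eq[OF nz])
  also have "\<dots> \<longleftrightarrow> x * ([:b:] * y) = [:a:] * z"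
    by (simp only: to_fract_mult[symmetric] to_fract_eq_iff)
  finally show ?thesis .
qed

lemma lc_factorization_primes:
  fixes L :: "'a::pid poly fract poly"
  assumes "lc_factorization L c Ps e"
  shows "\<And>p. p \<in> Ps \<Longrightarrow> prime_elem p \<and> degree p > 0"
    and "\<And>p q. p \<in> Ps \<Longrightarrow> q \<in> Ps \<Longrightarrow> p \<noteq> q \<Longrightarrow> \<not> p dvd q"
proof -
  show prime: "prime_elem p \<and> degree p > 0" if "p \<in> Ps" for p
  proof -
    have "irreducible p" "degree p > 0" using assms that by (auto simp: lc_factorization_def)
    then show ?thesis using pid_poly_irreducible_imp_prime_elem by blast
  qed
  show "\<not> p dvd q" if "p \<in> Ps" "q \<in> Ps" "p \<noteq> q" for p q
    using assms that prime[OF that(1)] by (auto simp: lc_factorization_def prime_elem_def)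
qed

lemma desingularized_if_lead_coeff_pseudo_dvd:
  fixes \<gamma> \<tau> :: "'a::pid" and L S T :: "'a poly fract poly"
  assumes T: "desingularized \<gamma> \<tau> dx L T" and S: "S \<in> cont \<gamma> \<tau> dx L" "S \<noteq> 0" and L0: "L \<noteq> 0"
    and lcT: "sigma_pow \<gamma> \<tau> (int (degree L) - int (degree T)) (lead_coeff T) = to_fract a"
    and a0: "a \<noteq> 0"
    and lcS: "sigma_pow \<gamma> \<tau> (int (degree L) - int (degree S)) (lead_coeff S) = to_fract b"
    and dvd: "\<alpha> \<noteq> 0" "smult \<alpha> a = b * q"
  shows "desingularized \<gamma> \<tau> dx L S"
  unfolding desingularized_def
proof (intro conjI allI impI)
  show "S \<noteq> 0" "S \<in> cont \<gamma> \<tau> dx L" by (fact S)+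
  fix c Ps e assume fact: "lc_factorization L c Ps e"
  note prime = lc_factorization_primes(1)[OF fact] and ndvd = lc_factorization_primes(2)[OF fact]
  have fin: "finite Ps" and lcL: "lead_coeff L = to_fract ([:c:] * (\<Prod>p\<in>Ps. p ^ e p))"
    using fact by (auto simp: lc_factorization_def)
  have nz: "(\<Prod>p\<in>Ps. p ^ m p) \<noteq> 0" for m by (rule prod_prime_powers_nonzero[OF fin prime ndvd])
  have c0: "c \<noteq> 0" using lcL L0 by auto
  from T fact obtain a' b' k where b'0: "b' \<noteq> 0"
    and "to_fract a = to_fract [:a':] / (to_fract [:b':] * to_fract (\<Prod>p\<in>Ps. p ^ k p)) * lead_coeff L"
    and nonrem: "\<forall>p\<in>Ps. \<forall>d. d > k p \<longrightarrow> \<not> removable \<gamma> \<tau> dx L (p ^ d)"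
    unfolding desingularized_def lcT by blast
  then have eqT: "a * ([:b':] * (\<Prod>p\<in>Ps. p ^ k p)) = [:a':] * ([:c:] * (\<Prod>p\<in>Ps. p ^ e p))"
    unfolding lcL by (simp only: to_fract_eq_frac_iff[OF b'0 nz])
  then have "a' \<noteq> 0" using a0 b'0 nz by auto
  have eqS: "b * (q * [:b':]) * (\<Prod>p\<in>Ps. p ^ k p) = [:\<alpha> * a' * c:] * (\<Prod>p\<in>Ps. p ^ e p)"
  proof -
    have "b * (q * [:b':]) * (\<Prod>p\<in>Ps. p ^ k p) = (b * q) * ([:b':] * (\<Prod>p\<in>Ps. p ^ k p))"
      by (simp only: ac_simps)
    also have "\<dots> = smult \<alpha> (a * ([:b':] * (\<Prod>p\<in>Ps. p ^ k p)))"
      by (simp only: dvd(2)[symmetric] mult_smult_left)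
    also have "\<dots> = [:\<alpha> * a' * c:] * (\<Prod>p\<in>Ps. p ^ e p)"
      unfolding eqT by (simp add: ac_simps)
    finally show ?thesis .
  qed
  have "\<alpha> * a' * c \<noteq> 0" using \<open>a' \<noteq> 0\<close> dvd(1) c0 by simp
  then obtain u f where u: "u \<noteq> 0" and b: "b = [:u:] * (\<Prod>p\<in>Ps. p ^ f p)"
    and bound: "\<And>p. p \<in> Ps \<Longrightarrow> f p + k p \<le> e p"
    using mult_prod_prime_powers_eq_imp[OF fin prime ndvd _ eqS] by blast
  define k' where "k' p = e p - f p" for p
  have "(\<Prod>p\<in>Ps. p ^ e p) = (\<Prod>p\<in>Ps. p ^ f p) * (\<Prod>p\<in>Ps. p ^ k' p)"
    unfolding k'_def prod.distrib[symmetric] power_add[symmetric]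
    using bound by (intro prod.cong refl) (metis add_leD1 le_add_diff_inverse)
  then have "sigma_pow \<gamma> \<tau> (int (degree L) - int (degree S)) (lead_coeff S) =
      to_fract [:u:] / (to_fract [:c:] * to_fract (\<Prod>p\<in>Ps. p ^ k' p)) * lead_coeff L"
    unfolding lcS lcL to_fract_eq_frac_iff[OF c0 nz] b by (simp add: ac_simps)
  moreover have "\<forall>p\<in>Ps. \<forall>d. d > k' p \<longrightarrow> \<not> removable \<gamma> \<tau> dx L (p ^ d)"
    using nonrem bound unfolding k'_def by (metis add_diff_cancel_left' diff_le_mono le_less_trans)
  ultimately show "\<exists>a b k. b \<noteq> 0 \<and>
      sigma_pow \<gamma> \<tau> (int (degree L) - int (degree S)) (lead_coeff S) =
        to_fract [:a:] / (to_fract [:b:] * to_fract (\<Prod>p\<in>Ps. p ^ k p)) * lead_coeff L \<and>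
      (\<forall>p\<in>Ps. \<forall>d. k p < d \<longrightarrow> \<not> removable \<gamma> \<tau> dx L (p ^ d))"
    using c0 by (intro exI[of _ u] exI[of _ c] exI[of _ k'] conjI)
qed

theorem mainTheorem2:
  fixes \<gamma> \<tau> :: "'a::pid" and dx :: "'a poly"
    and L S :: "'a poly fract poly" and k :: nat and s :: "'a poly"
  assumes unit_gamma: "\<gamma> dvd 1"
    and deg_dx: "degree dx \<le> 1"
    and L_RxD: "in_RxD L"
    and L_order: "degree L > 0"
    and desing_exists: "\<exists>T \<in> Mk \<gamma> \<tau> dx L k. desingularized \<gamma> \<tau> dx L T"
    and s_in: "s \<in> coeff_ideal \<gamma> \<tau> dx L k"
    and s_nz: "s \<noteq> 0"
    and s_min: "\<forall>t \<in> coeff_ideal \<gamma> \<tau> dx L k. t \<noteq> 0 \<longrightarrow> degree s \<le> degree t"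
    and S_in: "S \<in> Mk \<gamma> \<tau> dx L k"
    and S_lc: "lead_coeff S = to_fract s"
  shows "desingularized \<gamma> \<tau> dx L S"
proof -
  obtain \<gamma>' where inverse: "\<gamma> * \<gamma>' = 1" using unit_gamma by (metis dvd_def)
  then have \<gamma>0: "\<gamma> \<noteq> 0" by auto
  obtain T where T: "T \<in> Mk \<gamma> \<tau> dx L k" "desingularized \<gamma> \<tau> dx L T" using desing_exists by blast
  then have T0: "T \<noteq> 0" and "lead_coeff T \<in> range to_fract"
    by (auto simp: desingularized_def Mk_def cont_def in_RxD_def)
  then obtain t where t: "lead_coeff T = to_fract t" "t \<noteq> 0" by (metis rangeE to_fract_0 leading_coeff_0_iff)
  have S0: "S \<noteq> 0" using S_lc s_nz by auto
  let ?twist = "\<lambda>P p. (sigmaR \<gamma> \<tau> ^^ (k - degree P)) p"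
  let ?normalize = "sigmaR_int \<gamma> \<tau> \<gamma>' (int (degree L) - int k)"
  have I: "is_ideal (coeff_ideal \<gamma> \<tau> dx L k)" by (rule is_ideal_coeff_ideal[OF \<gamma>0])
  have sI: "?twist S s \<in> coeff_ideal \<gamma> \<tau> dx L k" "?twist S s \<noteq> 0" "degree (?twist S s) = degree s"
    using funpow_sigmaR_lead_coeff_mem_coeff_ideal[OF \<gamma>0 S_in S0 S_lc] \<gamma>0 s_nz
    by (simp_all add: funpow_sigmaR_eq_0_iff degree_funpow_sigmaR)
  obtain \<alpha> q where \<alpha>: "\<alpha> \<noteq> 0" "smult \<alpha> (?twist T t) = ?twist S s * q"
    using I sI(1,2) _ funpow_sigmaR_lead_coeff_mem_coeff_ideal[OF \<gamma>0 T(1) T0 t(1)]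
    by (rule ideal_min_degree_pseudo_dvd) (use s_min sI(3) in auto)
  then have dvd: "smult \<alpha> (?normalize (?twist T t)) = ?normalize (?twist S s) * ?normalize q"
    by (metis sigmaR_int_mult[OF inverse] sigmaR_int_smult[OF inverse])
  have nz: "?normalize (?twist T t) \<noteq> 0"
    using t(2) \<gamma>0 by (simp add: sigmaR_int_eq_0_iff[OF inverse] funpow_sigmaR_eq_0_iff)
  have lcT: "sigma_pow \<gamma> \<tau> (int (degree L) - int (degree T)) (lead_coeff T) =
      to_fract (?normalize (?twist T t))"
    using T(1) t(1) by (intro sigma_pow_lead_coeff_eq[OF inverse]) (auto simp: Mk_def)
  have lcS: "sigma_pow \<gamma> \<tau> (int (degree L) - int (degree S)) (lead_coeff S) =
      to_fract (?normalize (?twist S s))"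
    using S_in S_lc by (intro sigma_pow_lead_coeff_eq[OF inverse]) (auto simp: Mk_def)
  have "S \<in> cont \<gamma> \<tau> dx L" "L \<noteq> 0" using S_in L_order by (auto simp: Mk_def)
  from desingularized_if_lead_coeff_pseudo_dvd[OF T(2) this(1) S0 this(2) lcT nz lcS \<alpha>(1) dvd]
  show ?thesis .
qed

end
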